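(* Let $N=\{1,\dots,n\}$ with $n\ge 2$ and $\mathcal{D}=\mathbb{R}^n_+$. A rule $R:\mathcal{D}\to\mathbb{R}^n_+$ satisfies scale invariance, downstream impartiality, upstream invariance, and order preservation if and only if it is the no-transfer rule, i.e. $R_i(e)=e_i$ for each $e\in\mathcal{D}$ and each $i\in N$.
   Context: Agents $1,\dots,n$ are located along a linear river, lower index meaning more upstream; agent $i$ has river inflow $e_i\ge 0$, and $e=(e_1,\dots,e_n)\in\mathcal{D}=\mathbb{R}^n_+$. An allocation for $e$ is $x\in\mathbb{R}^n_+$ with $\sum_{i=1}^n x_i=\sum_{i=1}^n e_i$ and $\sum_{i=1}^k x_i\le\sum_{i=1}^k e_i$ for each $k=1,\dots,n-1$. A rule is a map $R:\mathcal{D}\to\mathbb{R}^n_+$ assigning to each $e$ an allocation $R(e)$ for $e$. Axioms: Scale invariance: for each $e\in\mathcal{D}$ and each $\gamma\in\mathbb{R}_+$, $R(\gamma e)=\gamma R(e)$. Upstream invariance: for each $e,e'\in\mathcal{D}$ such that $e_i<e'_i$ for some $i\in N$ and $e_j=e'_j$ for all $j\ne i$, we have $R_k(e)=R_k(e')$ for each $k<i$. Downstream impartiality: for each $e,e'\in\mathcal{D}$ such that $e_i<e'_i$ for some $i\in N$ and $e_j=e'_j$ for all $j\ne i$, and for each $k,l>i$ with $e_k=e_l$, we have $R_k(e')-R_k(e)=R_l(e')-R_l(e)$. Order preservation: for each $e\in\mathcal{D}$ and $i,j\in N$, if $i<j$ and $e_i\ge e_j$ then $R_i(e)\ge R_j(e)$.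 *)

theory Defs
  imports Complex_Main
begin

text \<open>Agents are 1,...,n (lower index = more upstream). A profile e in D = R^n_+ is
represented as a function nat => real, nonnegative on {1..n} and zero outside {1..n}.\<close>

definition profiles :: "nat \<Rightarrow> (nat \<Rightarrow> real) set" where
  "profiles n = {e. (\<forall>i\<in>{1..n}. 0 \<le> e i) \<and> (\<forall>i. i \<notin> {1..n} \<longrightarrow> e i = 0)}"

definition is_allocation :: "nat \<Rightarrow> (nat \<Rightarrow> real) \<Rightarrow> (nat \<Rightarrow> real) \<Rightarrow> bool" where
  "is_allocation n e x \<longleftrightarrow>
     (\<forall>i\<in>{1..n}. 0 \<le> x i) \<and>
     (\<Sum>i=1..n. x i) = (\<Sum>i=1..n. e i) \<and>
     (\<forall>k\<in>{1..n-1}. (\<Sum>i=1..k. x i) \<le> (\<Sum>i=1..k. e i))"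

definition is_rule :: "nat \<Rightarrow> ((nat \<Rightarrow> real) \<Rightarrow> (nat \<Rightarrow> real)) \<Rightarrow> bool" where
  "is_rule n R \<longleftrightarrow> (\<forall>e\<in>profiles n. is_allocation n e (R e))"

definition scale_invariance :: "nat \<Rightarrow> ((nat \<Rightarrow> real) \<Rightarrow> (nat \<Rightarrow> real)) \<Rightarrow> bool" where
  "scale_invariance n R \<longleftrightarrow>
     (\<forall>e\<in>profiles n. \<forall>\<gamma>::real. 0 \<le> \<gamma> \<longrightarrow>
        (\<forall>i\<in>{1..n}. R (\<lambda>j. \<gamma> * e j) i = \<gamma> * R e i))"

definition raise_at :: "nat \<Rightarrow> (nat \<Rightarrow> real) \<Rightarrow> (nat \<Rightarrow> real) \<Rightarrow> nat \<Rightarrow> bool" where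
  "raise_at n e e' i \<longleftrightarrow> e \<in> profiles n \<and> e' \<in> profiles n \<and> i \<in> {1..n} \<and>
     e i < e' i \<and> (\<forall>j\<in>{1..n}. j \<noteq> i \<longrightarrow> e j = e' j)"

definition upstream_invariance :: "nat \<Rightarrow> ((nat \<Rightarrow> real) \<Rightarrow> (nat \<Rightarrow> real)) \<Rightarrow> bool" where
  "upstream_invariance n R \<longleftrightarrow>
     (\<forall>e e' i. raise_at n e e' i \<longrightarrow> (\<forall>k\<in>{1..n}. k < i \<longrightarrow> R e k = R e' k))"

definition downstream_impartiality :: "nat \<Rightarrow> ((nat \<Rightarrow> real) \<Rightarrow> (nat \<Rightarrow> real)) \<Rightarrow> bool" where
  "downstream_impartiality n R \<longleftrightarrow>
     (\<forall>e e' i. raise_at n e e' i \<longrightarrow>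
        (\<forall>k\<in>{1..n}. \<forall>l\<in>{1..n}. i < k \<longrightarrow> i < l \<longrightarrow> e k = e l \<longrightarrow>
           R e' k - R e k = R e' l - R e l))"

definition order_preservation :: "nat \<Rightarrow> ((nat \<Rightarrow> real) \<Rightarrow> (nat \<Rightarrow> real)) \<Rightarrow> bool" where
  "order_preservation n R \<longleftrightarrow>
     (\<forall>e\<in>profiles n. \<forall>i\<in>{1..n}. \<forall>j\<in>{1..n}. i < j \<longrightarrow> e j \<le> e i \<longrightarrow> R e j \<le> R e i)"

definition is_no_transfer :: "nat \<Rightarrow> ((nat \<Rightarrow> real) \<Rightarrow> (nat \<Rightarrow> real)) \<Rightarrow> bool" where
  "is_no_transfer n R \<longleftrightarrow> (\<forall>e\<in>profiles n. \<forall>i\<in>{1..n}. R e i = e i)"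

end

theory Submission
  imports Defs
begin

text \<open>Conversely, upstream invariance
makes \<open>R e k\<close> depend only on \<open>e 1, \<dots>, e k\<close>, so we may give every agent downstream of \<open>k\<close>
the inflow of agent \<open>k\<close>. In this flattened profile agents \<open>1, \<dots>, k - 1\<close> receive their own
inflow (induction on \<open>k\<close>), order preservation caps every downstream share by agent \<open>k\<close>'s share,
and then the feasibility constraint for the first \<open>k\<close> agents together with the total balance
force agent \<open>k\<close>'s share to be \<open>e k\<close>.\<close>

lemma upstream_invariance_single_change:
  assumes ui: "upstream_invariance n R"
    and e: "e \<in> profiles n" and e': "e' \<in> profiles n" and i: "i \<in> {1..n}"
    and agree: "\<forall>j\<in>{1..n}. j \<noteq> i \<longrightarrow> e j = e' j"
    and k: "k \<in> {1..n}" "k < i"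
  shows "R e k = R e' k"
proof (cases "e i = e' i")
  case True
  have "e = e'"
  proof
    fix j show "e j = e' j"
      using agree True e e' unfolding profiles_def by (cases "j = i") auto
  qed
  then show ?thesis by simp
next
  case False
  then have "raise_at n e e' i \<or> raise_at n e' e i"
    using e e' i agree unfolding raise_at_def by auto
  then show ?thesis
    using ui k unfolding upstream_invariance_def by metis
qed

lemma upstream_invariance_prefix:
  assumes ui: "upstream_invariance n R"
    and e: "e \<in> profiles n" and e': "e' \<in> profiles n" and k: "k \<in> {1..n}"
    and agree: "\<forall>j\<in>{1..k}. e j = e' j"
  shows "R e k = R e' k"
proof -
  define mix where "mix m = (\<lambda>j. if j \<le> m then e j else e' j)" for m
  have mix_profile: "mix m \<in> profiles n" for m
    using e e' unfolding profiles_def mix_def by auto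
  have "mix k = e'"
    using agree e e' unfolding mix_def profiles_def by (force intro: ext)
  moreover have "mix n = e"
    using e e' unfolding mix_def profiles_def by (force intro: ext)
  moreover have "k \<le> n" using k by simp
  then have "R (mix n) k = R (mix k) k"
  proof (induction rule: dec_induct)
    case (step m)
    have "R (mix (Suc m)) k = R (mix m) k"
      by (rule upstream_invariance_single_change[OF ui mix_profile mix_profile, of "Suc m"])
        (use step k in \<open>auto simp: mix_def\<close>)
    with step show ?case by simp
  qed simp
  ultimately show ?thesis by simp
qed

lemma allocation_prefix_le:
  assumes "is_allocation n e x" and "k \<le> n"
  shows "(\<Sum>i=1..k. x i) \<le> (\<Sum>i=1..k. e i)"
  using assms unfolding is_allocation_def
  by (cases "k = 0 \<or> k = n") auto

lemma sum_split_at: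
  fixes g :: "nat \<Rightarrow> real"
  assumes "k \<le> n"
  shows "(\<Sum>i=1..n. g i) = (\<Sum>i=1..k. g i) + (\<Sum>i\<in>{k<..n}. g i)"
proof -
  have "{1..n} = {1..k} \<union> {k<..n}" using assms by auto
  then have "(\<Sum>i=1..n. g i) = (\<Sum>i\<in>{1..k} \<union> {k<..n}. g i)" by simp
  also have "\<dots> = (\<Sum>i=1..k. g i) + (\<Sum>i\<in>{k<..n}. g i)"
    by (rule sum.union_disjoint) auto
  finally show ?thesis .
qed

lemma allocation_flat_tail:
  assumes alloc: "is_allocation n e x" and k: "k \<in> {1..n}"
    and head: "\<forall>j\<in>{1..<k}. x j = e j"
    and flat: "\<forall>i\<in>{k<..n}. e i = e k"
    and capped: "\<forall>i\<in>{k<..n}. x i \<le> x k"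
  shows "x k = e k"
proof -
  have head_sum: "(\<Sum>j\<in>{1..<k}. x j) = (\<Sum>j\<in>{1..<k}. e j)"
    using head by (auto intro: sum.cong)
  have prefix_x: "(\<Sum>j=1..k. x j) = (\<Sum>j\<in>{1..<k}. x j) + x k"
    and prefix_e: "(\<Sum>j=1..k. e j) = (\<Sum>j\<in>{1..<k}. e j) + e k"
    using k by (simp_all add: sum.last_plus)
  have upper: "x k \<le> e k"
    using allocation_prefix_le[OF alloc, of k] k head_sum prefix_x prefix_e by simp
  have "(\<Sum>i=1..n. x i) = (\<Sum>i=1..n. e i)"
    using alloc unfolding is_allocation_def by simp
  then have "x k + (\<Sum>i\<in>{k<..n}. x i) = e k + real (n - k) * e k"
    using k flat head_sum prefix_x prefix_e sum_split_at[of k n x] sum_split_at[of k n e]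
    by simp
  moreover have "(\<Sum>i\<in>{k<..n}. x i) \<le> real (n - k) * x k"
    using sum_mono[of "{k<..n}" x "\<lambda>_. x k"] capped by simp
  ultimately have "real (n - k + 1) * e k \<le> real (n - k + 1) * x k"
    by (simp add: algebra_simps)
  then have "e k \<le> x k"
    by (rule mult_left_le_imp_le) simp
  with upper show ?thesis by simp
qed

definition flatten_tail :: "nat \<Rightarrow> nat \<Rightarrow> (nat \<Rightarrow> real) \<Rightarrow> nat \<Rightarrow> real" where
  "flatten_tail n k e j = (if j \<in> {1..n} then e (min j k) else 0)"

lemma flatten_tail_profile:
  assumes "e \<in> profiles n" and "k \<in> {1..n}"
  shows "flatten_tail n k e \<in> profiles n"
  using assms unfolding profiles_def flatten_tail_def by (auto simp: min_def)

lemma no_transfer_if_upstream_invariant_order_preserving: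
  assumes rule: "is_rule n R" and ui: "upstream_invariance n R"
    and op: "order_preservation n R"
  shows "is_no_transfer n R"
proof -
  have "\<forall>e\<in>profiles n. R e k = e k" if "k \<in> {1..n}" for k
    using that
  proof (induction k rule: less_induct)
    case (less k)
    show ?case
    proof
      fix e assume e: "e \<in> profiles n"
      define f where "f = flatten_tail n k e"
      have f: "f \<in> profiles n"
        unfolding f_def using e less.prems by (rule flatten_tail_profile)
      have f_k: "f k = e k" and f_tail: "\<forall>i\<in>{k<..n}. f i = f k"
        using less.prems by (simp_all add: f_def flatten_tail_def)
      have "R e k = R f k"
        by (rule upstream_invariance_prefix[OF ui e f less.prems])
          (use less.prems in \<open>simp add: f_def flatten_tail_def\<close>)
      also have "R f k = f k"
      proof (rule allocation_flat_tail[OF _ less.prems])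
        show "is_allocation n f (R f)"
          using rule f unfolding is_rule_def by blast
        show "\<forall>j\<in>{1..<k}. R f j = f j"
          using less.IH f less.prems by auto
        show "\<forall>i\<in>{k<..n}. f i = f k" by (fact f_tail)
        show "\<forall>i\<in>{k<..n}. R f i \<le> R f k"
          using op f f_tail less.prems unfolding order_preservation_def by auto
      qed
      finally show "R e k = e k" using f_k by simp
    qed
  qed
  then show ?thesis unfolding is_no_transfer_def by blast
qed

lemma no_transfer_satisfies_axioms:
  assumes "is_no_transfer n R"
  shows "scale_invariance n R \<and> downstream_impartiality n R \<and>
         upstream_invariance n R \<and> order_preservation n R"
proof -
  have "(\<lambda>j. \<gamma> * e j) \<in> profiles n" if "e \<in> profiles n" "0 \<le> \<gamma>" for e and \<gamma> :: real
    using that unfolding profiles_def by auto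
  with assms show ?thesis
    unfolding is_no_transfer_def scale_invariance_def downstream_impartiality_def
      upstream_invariance_def order_preservation_def raise_at_def
    by auto
qed

theorem theorem3:
  fixes n :: nat and R :: "(nat \<Rightarrow> real) \<Rightarrow> (nat \<Rightarrow> real)"
  assumes "2 \<le> n" and "is_rule n R"
  shows "(scale_invariance n R \<and> downstream_impartiality n R \<and>
          upstream_invariance n R \<and> order_preservation n R) \<longleftrightarrow> is_no_transfer n R"
  using no_transfer_if_upstream_invariant_order_preserving[OF assms(2)]
    no_transfer_satisfies_axioms
  by blast

end
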